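(* For every ProbNetKAT program $p$, every $n\in\mathbb{N}$ and all $a,b,b'\subseteq\mathsf{Pk}$, \[ \sum_{a'\subseteq\mathsf{Pk}} [b'=a'\cup b]\cdot \mathcal{B}[\![p^{(n)}]\!]_{a,a'} = \sum_{a'\subseteq\mathsf{Pk}} \big(\mathcal{S}[\![p]\!]^{n+1}\big)_{(a,b),(a',b')}. \]
   Context: $\mathsf{Pk}$ is a finite set of packets (records of finitely many fields with finitely many values); $[\varphi]$ is the Iverson bracket. ProbNetKAT programs are built from predicates $\mathsf{false},\mathsf{true}, f=n$, their negations/disjunctions/conjunctions, assignments $f\leftarrow n$, union $p\,\&\,q$, sequencing $p;q$, probabilistic choice $p\oplus_r q$ and iteration $p^*$. $p^{(0)}=\mathsf{true}$, $p^{(n+1)}=\mathsf{true}\,\&\,(p;p^{(n)})$. The matrix semantics $\mathcal{B}[\![p]\!]\in[0,1]^{2^{\mathsf{Pk}}\times 2^{\mathsf{Pk}}}$: $\mathcal{B}[\![\mathsf{false}]\!]_{ab}=[b=\emptyset]$; $\mathcal{B}[\![\mathsf{true}]\!]_{ab}=[a=b]$; $\mathcal{B}[\![f=n]\!]_{ab}=[b=\{\pi\in a:\pi.f=n\}]$; $\mathcal{B}[\![\neg t]\!]_{ab}=[b\subseteq a]\mathcal{B}[\![t]\!]_{a,a-b}$; $\mathcal{B}[\![f\leftarrow n]\!]_{ab}=[b=\{\pi[f:=n]:\pi\in a\}]$; $\mathcal{B}[\![p\,\&\,q]\!]_{ab}=\sum_{c,d}[c\cup d=b]\mathcal{B}[\![p]\!]_{ac}\mathcal{B}[\![q]\!]_{ad}$;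 $\mathcal{B}[\![p;q]\!]=\mathcal{B}[\![p]\!]\mathcal{B}[\![q]\!]$; $\mathcal{B}[\![p\oplus_r q]\!]=r\mathcal{B}[\![p]\!]+(1-r)\mathcal{B}[\![q]\!]$; $\mathcal{B}[\![p^*]\!]_{ab}=\lim_n\mathcal{B}[\![p^{(n)}]\!]_{ab}$. The small-step matrix is $\mathcal{S}[\![p]\!]_{(a,b),(a',b')}=[b'=b\cup a]\,\mathcal{B}[\![p]\!]_{a,a'}$. *)

theory Defs
  imports Complex_Main
begin

text \<open>Packets are records: total functions from a finite set of fields 'f to a
finite set of values 'v.  Pk is the (finite) type of all such packets; subsets of
Pk are elements of type ('f \<Rightarrow> 'v) set, which is again a finite type.\<close>

type_synonym ('f,'v) pk = "'f \<Rightarrow> 'v"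

definition iv :: "bool \<Rightarrow> real" where "iv P = (if P then 1 else 0)"

datatype ('f,'v) pred =
    PFalse | PTrue | Test 'f 'v | Neg "('f,'v) pred"
  | Disj "('f,'v) pred" "('f,'v) pred" | Conj "('f,'v) pred" "('f,'v) pred"

datatype ('f,'v) prog =
    Pred "('f,'v) pred" | Assign 'f 'v
  | Union "('f,'v) prog" "('f,'v) prog"
  | Seq "('f,'v) prog" "('f,'v) prog"
  | Choice "('f,'v) prog" real "('f,'v) prog"
  | Star "('f,'v) prog"

definition mmult :: "('i::finite \<Rightarrow> 'i \<Rightarrow> real) \<Rightarrow> ('i \<Rightarrow> 'i \<Rightarrow> real) \<Rightarrow> 'i \<Rightarrow> 'i \<Rightarrow> real" where
  "mmult M N i j = (\<Sum>k\<in>UNIV. M i k * N k j)"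

definition mid :: "'i \<Rightarrow> 'i \<Rightarrow> real" where
  "mid i j = iv (i = j)"

primrec mpow :: "('i::finite \<Rightarrow> 'i \<Rightarrow> real) \<Rightarrow> nat \<Rightarrow> 'i \<Rightarrow> 'i \<Rightarrow> real" where
  "mpow M 0 = mid"
| "mpow M (Suc n) = mmult (mpow M n) M"

definition munion :: "(('f::finite,'v::finite) pk set \<Rightarrow> ('f,'v) pk set \<Rightarrow> real)
   \<Rightarrow> (('f,'v) pk set \<Rightarrow> ('f,'v) pk set \<Rightarrow> real) \<Rightarrow> ('f,'v) pk set \<Rightarrow> ('f,'v) pk set \<Rightarrow> real" where
  "munion M N a b = (\<Sum>c\<in>UNIV. \<Sum>d\<in>UNIV. iv (c \<union> d = b) * M a c * N a d)"

primrec Bpred :: "('f::finite,'v::finite) pred \<Rightarrow> ('f,'v) pk set \<Rightarrow> ('f,'v) pk set \<Rightarrow> real" where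
  "Bpred PFalse a b = iv (b = {})"
| "Bpred PTrue a b = iv (a = b)"
| "Bpred (Test f n) a b = iv (b = {\<pi>\<in>a. \<pi> f = n})"
| "Bpred (Neg t) a b = iv (b \<subseteq> a) * Bpred t a (a - b)"
| "Bpred (Disj t u) a b = munion (Bpred t) (Bpred u) a b"
| "Bpred (Conj t u) a b = mmult (Bpred t) (Bpred u) a b"

primrec Biter :: "(('f::finite,'v::finite) pk set \<Rightarrow> ('f,'v) pk set \<Rightarrow> real) \<Rightarrow> nat
   \<Rightarrow> ('f,'v) pk set \<Rightarrow> ('f,'v) pk set \<Rightarrow> real" where
  "Biter M 0 = mid"
| "Biter M (Suc n) = munion mid (mmult M (Biter M n))"

primrec B :: "('f::finite,'v::finite) prog \<Rightarrow> ('f,'v) pk set \<Rightarrow> ('f,'v) pk set \<Rightarrow> real" where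
  "B (Pred t) = Bpred t"
| "B (Assign f n) = (\<lambda>a b. iv (b = (\<lambda>\<pi>. \<pi>(f := n)) ` a))"
| "B (Union p q) = munion (B p) (B q)"
| "B (Seq p q) = mmult (B p) (B q)"
| "B (Choice p r q) = (\<lambda>a b. r * B p a b + (1 - r) * B q a b)"
| "B (Star p) = (\<lambda>a b. lim (\<lambda>n. Biter (B p) n a b))"

primrec piter :: "('f,'v) prog \<Rightarrow> nat \<Rightarrow> ('f,'v) prog" where
  "piter p 0 = Pred PTrue"
| "piter p (Suc n) = Union (Pred PTrue) (Seq p (piter p n))"

primrec wf_prog :: "('f,'v) prog \<Rightarrow> bool" where
  "wf_prog (Pred t) = True"
| "wf_prog (Assign f n) = True"
| "wf_prog (Union p q) = (wf_prog p \<and> wf_prog q)"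
| "wf_prog (Seq p q) = (wf_prog p \<and> wf_prog q)"
| "wf_prog (Choice p r q) = (0 \<le> r \<and> r \<le> 1 \<and> wf_prog p \<and> wf_prog q)"
| "wf_prog (Star p) = wf_prog p"

definition S :: "('f::finite,'v::finite) prog \<Rightarrow> (('f,'v) pk set \<times> ('f,'v) pk set)
   \<Rightarrow> (('f,'v) pk set \<times> ('f,'v) pk set) \<Rightarrow> real" where
  "S p ab ab' = iv (snd ab' = snd ab \<union> fst ab) * B p (fst ab) (fst ab')"

end

theory Submission
  imports Defs
begin

text \<open>Both sides are the probability that, from the state (a, b), the accumulator
holds b' after n + 1 small steps.  The big-step matrix of p^(n) unfolds as "stop now,
or run p once and continue", and a small step runs p while adding the current packet
set to the accumulator, so an induction on n matches the two unfoldings.  The one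
analytic input is that every B p is stochastic, so that the last small step carries
total mass 1.  For p^* this needs the limit defining B to exist: the mass that p^(n)
puts on subsets of a fixed c decreases in n, and the individual entries are recovered
from these masses by well-founded induction on c.\<close>

lemma iv_mult: "iv P * y = (if P then y else 0)"
  by (simp add: iv_def)

lemma mult_iv: "y * iv P = (if P then y else 0)"
  by (simp add: iv_def)

lemma iv_nonneg: "0 \<le> iv P"
  by (simp add: iv_def)

lemma sum_iv_point: "(\<Sum>y\<in>UNIV. iv (y = x) * f y) = f (x::'a::finite)"
  by (simp add: iv_mult)

lemma sum_iv_point': "(\<Sum>y\<in>UNIV. iv (x = y) * f y) = f (x::'a::finite)"
  by (simp add: iv_mult)

lemma sum_UNIV_prod:
  "(\<Sum>k\<in>(UNIV::('a::finite \<times> 'b::finite) set). f k) = (\<Sum>x\<in>UNIV. \<Sum>y\<in>UNIV. f (x, y))"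
  by (simp add: sum.cartesian_product UNIV_Times_UNIV[symmetric] del: UNIV_Times_UNIV)

lemma mmult_assoc: "mmult (mmult M N) P = mmult M (mmult N P)"
proof (intro ext)
  fix i j
  have "mmult (mmult M N) P i j = (\<Sum>k\<in>UNIV. \<Sum>l\<in>UNIV. M i l * N l k * P k j)"
    by (simp add: mmult_def sum_distrib_right)
  also have "\<dots> = (\<Sum>l\<in>UNIV. \<Sum>k\<in>UNIV. M i l * N l k * P k j)"
    by (rule sum.swap)
  also have "\<dots> = mmult M (mmult N P) i j"
    by (simp add: mmult_def sum_distrib_left mult.assoc)
  finally show "mmult (mmult M N) P i j = mmult M (mmult N P) i j" .
qed

lemma mmult_mid_left: "mmult mid M = M"
  by (intro ext) (simp add: mmult_def mid_def sum_iv_point')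

lemma mmult_mid_right: "mmult M mid = M"
  by (intro ext) (simp add: mmult_def mid_def mult_iv)

lemma mpow_Suc_left: "mpow M (Suc n) = mmult M (mpow M n)"
  by (induction n) (simp_all add: mmult_mid_left mmult_mid_right mmult_assoc)

lemma sum_mpow_Suc:
  "(\<Sum>x\<in>X. mpow M (Suc n) i (j x)) = (\<Sum>k\<in>UNIV. M i k * (\<Sum>x\<in>X. mpow M n k (j x)))"
  unfolding mpow_Suc_left mmult_def sum_distrib_left by (rule sum.swap)

lemma munion_mid_left: "munion mid N a b = (\<Sum>d\<in>UNIV. iv (a \<union> d = b) * N a d)"
proof -
  have "munion mid N a b = (\<Sum>c\<in>UNIV. iv (a = c) * (\<Sum>d\<in>UNIV. iv (c \<union> d = b) * N a d))"
    by (simp add: munion_def mid_def sum_distrib_left mult_ac)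
  then show ?thesis
    by (simp only: sum_iv_point')
qed

lemma Bpred_PTrue: "Bpred PTrue = mid"
  by (intro ext) (simp add: mid_def)

lemma B_piter: "B (piter p n) = Biter (B p) n"
  by (induction n) (simp_all add: Bpred_PTrue)

definition stochastic :: "('i::finite \<Rightarrow> 'i \<Rightarrow> real) \<Rightarrow> bool" where
  "stochastic M \<longleftrightarrow> (\<forall>a b. 0 \<le> M a b) \<and> (\<forall>a. (\<Sum>b\<in>UNIV. M a b) = 1)"

lemma stochastic_mid: "stochastic mid"
  by (simp add: stochastic_def mid_def iv_def)

lemma stochastic_deterministic: "stochastic (\<lambda>a b. iv (b = f a))"
  by (simp add: stochastic_def iv_def)

lemma stochastic_mmult:
  assumes "stochastic M" "stochastic N"
  shows "stochastic (mmult M N)"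
proof -
  have "0 \<le> mmult M N a b" for a b
    using assms unfolding stochastic_def mmult_def by (blast intro: sum_nonneg mult_nonneg_nonneg)
  moreover have "(\<Sum>b\<in>UNIV. mmult M N a b) = 1" for a
  proof -
    have "(\<Sum>b\<in>UNIV. mmult M N a b) = (\<Sum>k\<in>UNIV. M a k * (\<Sum>b\<in>UNIV. N k b))"
      unfolding mmult_def by (subst sum.swap) (simp add: sum_distrib_left)
    also have "\<dots> = 1"
      using assms by (simp add: stochastic_def)
    finally show ?thesis .
  qed
  ultimately show ?thesis by (simp add: stochastic_def)
qed

lemma stochastic_munion:
  assumes "stochastic M" "stochastic N"
  shows "stochastic (munion M N)"
proof -
  have "0 \<le> munion M N a b" for a b
    using assms unfolding stochastic_def munion_def
    by (blast intro: sum_nonneg mult_nonneg_nonneg iv_nonneg)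
  moreover have "(\<Sum>b\<in>UNIV. munion M N a b) = 1" for a
  proof -
    have "(\<Sum>b\<in>UNIV. munion M N a b)
        = (\<Sum>c\<in>UNIV. \<Sum>b\<in>UNIV. \<Sum>d\<in>UNIV. iv (c \<union> d = b) * (M a c * N a d))"
      unfolding munion_def by (subst sum.swap) (simp add: mult.assoc)
    also have "\<dots> = (\<Sum>c\<in>UNIV. \<Sum>d\<in>UNIV. \<Sum>b\<in>UNIV. iv (c \<union> d = b) * (M a c * N a d))"
      by (intro sum.cong refl sum.swap)
    also have "\<dots> = (\<Sum>c\<in>UNIV. M a c * (\<Sum>d\<in>UNIV. N a d))"
      by (simp add: sum_iv_point' sum_distrib_left)
    also have "\<dots> = 1"
      using assms by (simp add: stochastic_def)
    finally show ?thesis .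
  qed
  ultimately show ?thesis by (simp add: stochastic_def)
qed

lemma stochastic_Biter: "stochastic M \<Longrightarrow> stochastic (Biter M n)"
  by (induction n) (simp_all add: stochastic_mid stochastic_munion stochastic_mmult)

lemma munion_deterministic:
  "munion (\<lambda>a b. iv (b = f a)) (\<lambda>a b. iv (b = g a)) = (\<lambda>a b. iv (b = f a \<union> g a))"
proof (intro ext)
  fix a b
  have "munion (\<lambda>a b. iv (b = f a)) (\<lambda>a b. iv (b = g a)) a b
      = (\<Sum>c\<in>UNIV. iv (c = f a) * (\<Sum>d\<in>UNIV. iv (d = g a) * iv (c \<union> d = b)))"
    by (simp add: munion_def sum_distrib_left mult_ac)
  also have "\<dots> = iv (b = f a \<union> g a)"
    by (simp only: sum_iv_point) (auto simp: iv_def)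
  finally show "munion (\<lambda>a b. iv (b = f a)) (\<lambda>a b. iv (b = g a)) a b = iv (b = f a \<union> g a)" .
qed

lemma mmult_deterministic:
  "mmult (\<lambda>a b. iv (b = f a)) (\<lambda>a b. iv (b = g a)) = (\<lambda>a b. iv (b = g (f a)))"
  by (intro ext) (simp add: mmult_def sum_iv_point)

lemma Bpred_deterministic: "\<exists>f. (\<forall>a. f a \<subseteq> a) \<and> Bpred t = (\<lambda>a b. iv (b = f a))"
proof (induction t)
  case PFalse
  show ?case by (intro exI[of _ "\<lambda>a. {}"]) auto
next
  case PTrue
  show ?case by (intro exI[of _ "\<lambda>a. a"]) (auto simp: iv_def fun_eq_iff)
next
  case (Test f n)
  show ?case by (intro exI[of _ "\<lambda>a. {\<pi>\<in>a. \<pi> f = n}"]) auto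
next
  case (Neg t)
  then obtain f where "\<forall>a. f a \<subseteq> a" and "Bpred t = (\<lambda>a b. iv (b = f a))" by blast
  then show ?case
    by (intro exI[of _ "\<lambda>a. a - f a"]) (auto simp: iv_def double_diff fun_eq_iff)
next
  case (Disj t u)
  then obtain f g where "\<forall>a. f a \<subseteq> a" "Bpred t = (\<lambda>a b. iv (b = f a))"
    and "\<forall>a. g a \<subseteq> a" "Bpred u = (\<lambda>a b. iv (b = g a))" by blast
  then show ?case
    by (intro exI[of _ "\<lambda>a. f a \<union> g a"]) (auto simp: munion_deterministic)
next
  case (Conj t u)
  then obtain f g where "\<forall>a. f a \<subseteq> a" "Bpred t = (\<lambda>a b. iv (b = f a))"
    and "\<forall>a. g a \<subseteq> a" "Bpred u = (\<lambda>a b. iv (b = g a))" by blast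
  then show ?case
    by (intro exI[of _ "\<lambda>a. g (f a)"]) (auto simp: mmult_deterministic)
qed

lemma stochastic_Bpred: "stochastic (Bpred t)"
  using Bpred_deterministic[of t] stochastic_deterministic by auto

definition mass_below :: "(('f::finite,'v::finite) pk set \<Rightarrow> ('f,'v) pk set \<Rightarrow> real) \<Rightarrow> nat
   \<Rightarrow> ('f,'v) pk set \<Rightarrow> ('f,'v) pk set \<Rightarrow> real" where
  "mass_below M n a c = (\<Sum>b\<in>UNIV. iv (b \<subseteq> c) * Biter M n a b)"

lemma mass_below_0: "mass_below M 0 a c = iv (a \<subseteq> c)"
  by (simp add: mass_below_def mid_def mult_iv)

lemma mass_below_Suc:
  "mass_below M (Suc n) a c = iv (a \<subseteq> c) * (\<Sum>e\<in>UNIV. M a e * mass_below M n e c)"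
proof -
  have "mass_below M (Suc n) a c
      = (\<Sum>d\<in>UNIV. \<Sum>b\<in>UNIV. iv (a \<union> d = b) * (iv (b \<subseteq> c) * mmult M (Biter M n) a d))"
    unfolding mass_below_def Biter.simps munion_mid_left sum_distrib_left
    by (subst sum.swap) (simp add: mult_ac)
  also have "\<dots> = (\<Sum>d\<in>UNIV. iv (a \<union> d \<subseteq> c) * mmult M (Biter M n) a d)"
    by (simp only: sum_iv_point')
  also have "\<dots> = iv (a \<subseteq> c) * (\<Sum>d\<in>UNIV. \<Sum>e\<in>UNIV. M a e * (iv (d \<subseteq> c) * Biter M n e d))"
    by (simp add: iv_def mmult_def sum_distrib_left mult_ac)
  also have "\<dots> = iv (a \<subseteq> c) * (\<Sum>e\<in>UNIV. M a e * mass_below M n e c)"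
    unfolding mass_below_def sum_distrib_left by (subst sum.swap) (rule refl)
  finally show ?thesis .
qed

lemma mass_below_nonneg: "stochastic M \<Longrightarrow> 0 \<le> mass_below M n a c"
  using stochastic_Biter[of M n] unfolding mass_below_def stochastic_def
  by (blast intro: sum_nonneg mult_nonneg_nonneg iv_nonneg)

lemma mass_below_Suc_le:
  assumes M: "stochastic M"
  shows "mass_below M (Suc n) a c \<le> mass_below M n a c"
proof (induction n arbitrary: a)
  case 0
  have "(\<Sum>e\<in>UNIV. M a e * mass_below M 0 e c) \<le> (\<Sum>e\<in>UNIV. M a e)"
    using M unfolding stochastic_def by (intro sum_mono) (simp add: mass_below_0 mult_iv)
  also have "\<dots> = 1"
    using M by (simp add: stochastic_def)
  finally show ?case
    by (simp add: mass_below_Suc[of M 0] mass_below_0 iv_def)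
next
  case (Suc n)
  have "(\<Sum>e\<in>UNIV. M a e * mass_below M (Suc n) e c) \<le> (\<Sum>e\<in>UNIV. M a e * mass_below M n e c)"
    using M Suc unfolding stochastic_def by (intro sum_mono mult_left_mono) auto
  then show ?case
    by (simp only: mass_below_Suc[of M "Suc n"] mass_below_Suc[of M n]) (intro mult_left_mono iv_nonneg)
qed

lemma convergent_mass_below:
  assumes "stochastic M"
  shows "convergent (\<lambda>n. mass_below M n a c)"
proof -
  have "decseq (\<lambda>n. mass_below M n a c)"
    by (rule decseq_SucI) (rule mass_below_Suc_le[OF assms])
  with mass_below_nonneg[OF assms] obtain L where "(\<lambda>n. mass_below M n a c) \<longlonglongrightarrow> L"
    using decseq_convergent by meson
  then show ?thesis
    by (auto simp: convergent_def)
qed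

lemma convergent_Biter:
  assumes M: "stochastic M"
  shows "convergent (\<lambda>n. Biter M n a b)"
proof -
  have "finite b" by simp
  then show ?thesis
  proof (induction b rule: finite_psubset_induct)
    case (psubset b)
    have eq: "Biter M n a b = mass_below M n a b - (\<Sum>c\<in>{c. c \<subset> b}. Biter M n a c)" for n
    proof -
      have "mass_below M n a b = (\<Sum>c\<in>{c. c \<subseteq> b}. Biter M n a c)"
        unfolding mass_below_def by (simp add: iv_mult sum.If_cases)
      also have "{c. c \<subseteq> b} = insert b {c. c \<subset> b}"
        by auto
      also have "(\<Sum>c\<in>insert b {c. c \<subset> b}. Biter M n a c)
          = Biter M n a b + (\<Sum>c\<in>{c. c \<subset> b}. Biter M n a c)"
        by (subst sum.insert) auto
      finally show ?thesis by simp
    qed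
    show ?case
      unfolding eq by (intro convergent_diff convergent_mass_below[OF M] convergent_sum psubset.IH) simp
  qed
qed

lemma stochastic_lim_Biter:
  assumes M: "stochastic M"
  shows "stochastic (\<lambda>a b. lim (\<lambda>n. Biter M n a b))"
proof -
  have L: "(\<lambda>n. Biter M n a b) \<longlonglongrightarrow> lim (\<lambda>n. Biter M n a b)" for a b
    using convergent_Biter[OF M] by (simp add: convergent_LIMSEQ_iff)
  have "0 \<le> lim (\<lambda>n. Biter M n a b)" for a b
    using stochastic_Biter[OF M] unfolding stochastic_def by (intro LIMSEQ_le_const[OF L]) auto
  moreover have "(\<Sum>b\<in>UNIV. lim (\<lambda>n. Biter M n a b)) = 1" for a
  proof -
    have "(\<lambda>n. \<Sum>b\<in>UNIV. Biter M n a b) \<longlonglongrightarrow> (\<Sum>b\<in>UNIV. lim (\<lambda>n. Biter M n a b))"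
      by (intro tendsto_sum L)
    moreover have "(\<lambda>n. \<Sum>b\<in>UNIV. Biter M n a b) = (\<lambda>n. 1)"
      using stochastic_Biter[OF M] by (simp add: stochastic_def)
    ultimately show ?thesis
      by (simp add: LIMSEQ_const_iff)
  qed
  ultimately show ?thesis by (simp add: stochastic_def)
qed

lemma stochastic_B: "wf_prog p \<Longrightarrow> stochastic (B p)"
proof (induction p)
  case (Assign f n)
  show ?case using stochastic_deterministic by simp
next
  case (Choice p r q)
  then have "0 \<le> r" "r \<le> 1" "stochastic (B p)" "stochastic (B q)" by auto
  then show ?case
    by (auto simp: stochastic_def sum.distrib sum_distrib_left[symmetric] intro!: add_nonneg_nonneg)
qed (simp_all add: stochastic_Bpred stochastic_munion stochastic_mmult stochastic_lim_Biter)

lemma sum_S_row: "(\<Sum>k\<in>UNIV. S p (a, b) k * f k) = (\<Sum>e\<in>UNIV. B p a e * f (e, b \<union> a))"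
proof -
  have "(\<Sum>k\<in>UNIV. S p (a, b) k * f k) = (\<Sum>e\<in>UNIV. \<Sum>y\<in>UNIV. iv (y = b \<union> a) * (B p a e * f (e, y)))"
    by (simp add: sum_UNIV_prod S_def mult.assoc)
  then show ?thesis
    by (simp only: sum_iv_point)
qed

lemma marginal_Biter_eq_sum_mpow_S:
  assumes "stochastic (B p)"
  shows "(\<Sum>a'\<in>UNIV. iv (b' = a' \<union> b) * Biter (B p) n a a')
       = (\<Sum>a'\<in>UNIV. mpow (S p) (Suc n) (a, b) (a', b'))"
proof (induction n arbitrary: a b)
  case 0
  have "(\<Sum>a'\<in>UNIV. iv (b' = a' \<union> b) * Biter (B p) 0 a a') = iv (b' = b \<union> a)"
    by (simp add: mid_def mult_iv Un_commute)
  also have "\<dots> = iv (b' = b \<union> a) * (\<Sum>a'\<in>UNIV. B p a a')"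
    using assms by (simp add: stochastic_def)
  also have "\<dots> = (\<Sum>a'\<in>UNIV. mpow (S p) (Suc 0) (a, b) (a', b'))"
    by (simp add: mmult_mid_left S_def sum_distrib_left)
  finally show ?case .
next
  case (Suc n)
  let ?Y = "mmult (B p) (Biter (B p) n)"
  have "(\<Sum>a'\<in>UNIV. iv (b' = a' \<union> b) * Biter (B p) (Suc n) a a')
      = (\<Sum>d\<in>UNIV. \<Sum>a'\<in>UNIV. iv (a \<union> d = a') * (iv (b' = a' \<union> b) * ?Y a d))"
    unfolding Biter.simps munion_mid_left sum_distrib_left by (subst sum.swap) (simp add: mult_ac)
  also have "\<dots> = (\<Sum>d\<in>UNIV. iv (b' = a \<union> d \<union> b) * ?Y a d)"
    by (simp only: sum_iv_point')
  also have "\<dots> = (\<Sum>d\<in>UNIV. \<Sum>e\<in>UNIV. B p a e * (iv (b' = d \<union> (b \<union> a)) * Biter (B p) n e d))"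
    by (simp add: mmult_def sum_distrib_left Un_ac mult_ac)
  also have "\<dots> = (\<Sum>e\<in>UNIV. B p a e * (\<Sum>d\<in>UNIV. iv (b' = d \<union> (b \<union> a)) * Biter (B p) n e d))"
    by (subst sum.swap) (simp add: sum_distrib_left)
  also have "\<dots> = (\<Sum>e\<in>UNIV. B p a e * (\<Sum>a'\<in>UNIV. mpow (S p) (Suc n) (e, b \<union> a) (a', b')))"
    by (simp only: Suc.IH)
  also have "\<dots> = (\<Sum>a'\<in>UNIV. mpow (S p) (Suc (Suc n)) (a, b) (a', b'))"
    by (simp only: sum_mpow_Suc sum_S_row)
  finally show ?case .
qed

theorem lemma4p3:
  fixes p :: "('f::finite, 'v::finite) prog" and n :: nat
    and a b b' :: "('f,'v) pk set"
  assumes "wf_prog p"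
  shows "(\<Sum>a'\<in>UNIV. iv (b' = a' \<union> b) * B (piter p n) a a')
       = (\<Sum>a'\<in>UNIV. mpow (S p) (n + 1) (a, b) (a', b'))"
  using marginal_Biter_eq_sum_mpow_S[OF stochastic_B[OF assms]] by (simp add: B_piter)

end
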